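(* Let $S$ be a finite pseudo-nilpotent semigroup with a fixed principal series $S=S_1\supset\cdots\supset S_m\supset S_{m+1}=\emptyset$, and let $a,b\in S$. If there is an edge in $\mathcal{N}_S$ between $a$ and $b$, then there exists a stem $S^{(i)}$ with $a,b\in S^{(i)}$.
   Context: For a semigroup $S$, $S^1$ denotes $S$ with an identity adjoined (if $S$ has none). For $x,y\in S$, $z_1,z_2,\ldots\in S^1$ define $\lambda_0=x$, $\rho_0=y$, $\lambda_{n+1}=\lambda_n z_{n+1}\rho_n$, $\rho_{n+1}=\rho_n z_{n+1}\lambda_n$; write $\lambda_n(x,y,z_1,\ldots,z_n)$, $\rho_n(x,y,z_1,\ldots,z_n)$. $S$ is nilpotent (Mal'cev) if for some $n\ge1$, $\lambda_n(a,b,c_1,\ldots,c_n)=\rho_n(a,b,c_1,\ldots,c_n)$ for all $a,b\in S$, $c_i\in S^1$. $\langle X\rangle$ is the subsemigroup generated by $X$. The upper non-nilpotent graph $\mathcal{N}_S$ has vertex set $S$ and an edge between $x,y$ iff $\langle x,y\rangle$ is not nilpotent. The empty set counts as an ideal; $S/I$ is the Rees factor, $S/\emptyset=S$. $S$ is pseudo-nilpotent if: whenever $x,y\in S$, $w_1,\ldots,w_m\in S^1$, $T$ is the subsemigroup generated by $x,y$ and the $w_i$ lying in $S$, $I$ is a (possibly empty) ideal of $T$, and $t<m$ are non-negative integers with (writing $\lambda_k=\lambda_k(x,y,w_1,\ldots,w_k)$, $\rho_k$ likewise) $\lambda_t\neq\rho_t$, $(\lambda_t,\rho_t)=(\lambda_m,\rho_m)$,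 $\lambda_m,\rho_m\notin I$, then for all $0\le i\le m$ there is an edge in $\mathcal{N}_{T/I}$ between (the images of) $\lambda_i$ and $\rho_i$. A principal series means each $S_i$ is an ideal of $S$ and no ideal lies strictly between $S_{i+1}$ and $S_i$; principal factors are $S_i/S_{i+1}$. For $1\le j\le m$ put $F^{(j)}=\{s\in S\setminus S_j: st\notin S_{j+1}\text{ or }ts\notin S_{j+1}\text{ for some }t\in S_j\setminus S_{j+1}\}$ and $S^{(j)}=F^{(j)}\cup(S_j\setminus S_{j+1})$. $S_i\setminus S_{i+1}$ is a root if $S_i/S_{i+1}$ is not nilpotent and $\langle a,b\rangle$ is nilpotent for all $a\in S_i\setminus S_{i+1}$, $b\in S_{i+1}$; in that case $S^{(i)}$ is called a stem. *)

theory Defs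
  imports Main
begin

text \<open>Semigroups are given by a carrier set and a binary operation.
  Elements of S^1 are encoded as options: None is the adjoined identity,
  Some s is s.\<close>

definition semigroup_on :: "'a set \<Rightarrow> ('a \<Rightarrow> 'a \<Rightarrow> 'a) \<Rightarrow> bool" where
  "semigroup_on S f \<longleftrightarrow> (\<forall>x\<in>S. \<forall>y\<in>S. f x y \<in> S) \<and>
     (\<forall>x\<in>S. \<forall>y\<in>S. \<forall>z\<in>S. f (f x y) z = f x (f y z))"

definition one_adj :: "'a set \<Rightarrow> 'a option set" where
  "one_adj U = Some ` U \<union> {None}"

definition mul3 :: "('a \<Rightarrow> 'a \<Rightarrow> 'a) \<Rightarrow> 'a \<Rightarrow> 'a option \<Rightarrow> 'a \<Rightarrow> 'a" where
  "mul3 f u z v = (case z of None \<Rightarrow> f u v | Some w \<Rightarrow> f (f u w) v)"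

fun lr :: "('a \<Rightarrow> 'a \<Rightarrow> 'a) \<Rightarrow> 'a \<Rightarrow> 'a \<Rightarrow> (nat \<Rightarrow> 'a option) \<Rightarrow> nat \<Rightarrow> 'a \<times> 'a" where
  "lr f x y z 0 = (x, y)"
| "lr f x y z (Suc n) =
     (let (l, r) = lr f x y z n in (mul3 f l (z (Suc n)) r, mul3 f r (z (Suc n)) l))"

definition lam :: "('a \<Rightarrow> 'a \<Rightarrow> 'a) \<Rightarrow> 'a \<Rightarrow> 'a \<Rightarrow> (nat \<Rightarrow> 'a option) \<Rightarrow> nat \<Rightarrow> 'a" where
  "lam f x y z n = fst (lr f x y z n)"

definition rho :: "('a \<Rightarrow> 'a \<Rightarrow> 'a) \<Rightarrow> 'a \<Rightarrow> 'a \<Rightarrow> (nat \<Rightarrow> 'a option) \<Rightarrow> nat \<Rightarrow> 'a" where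
  "rho f x y z n = snd (lr f x y z n)"

definition nilpotent_sg :: "('a \<Rightarrow> 'a \<Rightarrow> 'a) \<Rightarrow> 'a set \<Rightarrow> bool" where
  "nilpotent_sg f U \<longleftrightarrow> (\<exists>n\<ge>1. \<forall>a\<in>U. \<forall>b\<in>U. \<forall>c.
      (\<forall>i\<in>{1..n}. c i \<in> one_adj U) \<longrightarrow> lam f a b c n = rho f a b c n)"

inductive_set gen :: "('a \<Rightarrow> 'a \<Rightarrow> 'a) \<Rightarrow> 'a set \<Rightarrow> 'a set" for f X where
  base: "x \<in> X \<Longrightarrow> x \<in> gen f X"
| mult: "a \<in> gen f X \<Longrightarrow> b \<in> gen f X \<Longrightarrow> f a b \<in> gen f X"

definition nn_edge :: "('a \<Rightarrow> 'a \<Rightarrow> 'a) \<Rightarrow> 'a set \<Rightarrow> 'a \<Rightarrow> 'a \<Rightarrow> bool" where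
  "nn_edge f U x y \<longleftrightarrow> x \<in> U \<and> y \<in> U \<and> \<not> nilpotent_sg f (gen f {x, y})"

definition ideal_of :: "('a \<Rightarrow> 'a \<Rightarrow> 'a) \<Rightarrow> 'a set \<Rightarrow> 'a set \<Rightarrow> bool" where
  "ideal_of f T I \<longleftrightarrow> I \<subseteq> T \<and> (\<forall>x\<in>I. \<forall>t\<in>T. f x t \<in> I \<and> f t x \<in> I)"

text \<open>Rees factor T/I: element x of T is represented by Some x if x \<notin> I,
  and the zero (the class I, present only if I is nonempty) by None.\<close>
definition rees_img :: "'a set \<Rightarrow> 'a \<Rightarrow> 'a option" where
  "rees_img I x = (if x \<in> I then None else Some x)"

definition rees_carrier :: "'a set \<Rightarrow> 'a set \<Rightarrow> 'a option set" where
  "rees_carrier T I = rees_img I ` T"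

fun rees_mult :: "('a \<Rightarrow> 'a \<Rightarrow> 'a) \<Rightarrow> 'a set \<Rightarrow> 'a option \<Rightarrow> 'a option \<Rightarrow> 'a option" where
  "rees_mult f I (Some x) (Some y) = rees_img I (f x y)"
| "rees_mult f I _ _ = None"

definition pseudo_nilpotent :: "('a \<Rightarrow> 'a \<Rightarrow> 'a) \<Rightarrow> 'a set \<Rightarrow> bool" where
  "pseudo_nilpotent f S \<longleftrightarrow>
    (\<forall>x\<in>S. \<forall>y\<in>S. \<forall>m::nat. \<forall>w. \<forall>T I. \<forall>t::nat.
       (\<forall>i\<in>{1..m}. w i \<in> one_adj S) \<longrightarrow>
       T = gen f ({x, y} \<union> {s. \<exists>i\<in>{1..m}. w i = Some s}) \<longrightarrow>
       ideal_of f T I \<longrightarrow> t < m \<longrightarrow>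
       lam f x y w t \<noteq> rho f x y w t \<longrightarrow>
       lam f x y w t = lam f x y w m \<longrightarrow> rho f x y w t = rho f x y w m \<longrightarrow>
       lam f x y w m \<notin> I \<longrightarrow> rho f x y w m \<notin> I \<longrightarrow>
       (\<forall>i\<le>m. nn_edge (rees_mult f I) (rees_carrier T I)
                 (rees_img I (lam f x y w i)) (rees_img I (rho f x y w i))))"

definition principal_series ::
  "('a \<Rightarrow> 'a \<Rightarrow> 'a) \<Rightarrow> 'a set \<Rightarrow> (nat \<Rightarrow> 'a set) \<Rightarrow> nat \<Rightarrow> bool" where
  "principal_series f S Ser m \<longleftrightarrow> m \<ge> 1 \<and> Ser 1 = S \<and> Ser (m + 1) = {} \<and>
     (\<forall>i\<in>{1..m+1}. ideal_of f S (Ser i)) \<and>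
     (\<forall>i\<in>{1..m}. Ser (i + 1) \<subset> Ser i \<and>
        \<not> (\<exists>J. ideal_of f S J \<and> Ser (i + 1) \<subset> J \<and> J \<subset> Ser i))"

definition F_set :: "('a \<Rightarrow> 'a \<Rightarrow> 'a) \<Rightarrow> 'a set \<Rightarrow> (nat \<Rightarrow> 'a set) \<Rightarrow> nat \<Rightarrow> 'a set" where
  "F_set f S Ser j = {s \<in> S - Ser j. \<exists>t \<in> Ser j - Ser (j + 1).
       f s t \<notin> Ser (j + 1) \<or> f t s \<notin> Ser (j + 1)}"

definition stem_set :: "('a \<Rightarrow> 'a \<Rightarrow> 'a) \<Rightarrow> 'a set \<Rightarrow> (nat \<Rightarrow> 'a set) \<Rightarrow> nat \<Rightarrow> 'a set" where
  "stem_set f S Ser j = F_set f S Ser j \<union> (Ser j - Ser (j + 1))"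

definition is_root :: "('a \<Rightarrow> 'a \<Rightarrow> 'a) \<Rightarrow> (nat \<Rightarrow> 'a set) \<Rightarrow> nat \<Rightarrow> bool" where
  "is_root f Ser i \<longleftrightarrow>
     \<not> nilpotent_sg (rees_mult f (Ser (i + 1))) (rees_carrier (Ser i) (Ser (i + 1))) \<and>
     (\<forall>a \<in> Ser i - Ser (i + 1). \<forall>b \<in> Ser (i + 1). nilpotent_sg f (gen f {a, b}))"

end

theory Submission
  imports Defs
begin

text \<open>Non-nilpotency of \<open>\<langle>a, b\<rangle>\<close> in the finite semigroup \<open>S\<close> yields, by pigeonhole, a cycle
  of the \<open>\<lambda>/\<rho>\<close>-recurrence: a pair \<open>x \<noteq> y\<close> returned to itself after \<open>p \<ge> 1\<close> steps. The point
  \<open>x\<close> lies in the principal ideals of both \<open>a\<close> and \<open>b\<close>: outside \<open>S\<^sup>1aS\<^sup>1\<close> everything is a power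
  of \<open>b\<close>, and commuting data collapses the pair at once. Among all such cycles choose one whose
  point \<open>x\<close> lies in the deepest principal factor \<open>Ser k - Ser (k + 1)\<close>. Pseudo-nilpotency turns
  the cycle into non-nilpotency of \<open>Ser k / Ser (k + 1)\<close>; if \<open>\<langle>c, d\<rangle>\<close> were non-nilpotent for
  \<open>c\<close> in the factor and \<open>d \<in> Ser (k + 1)\<close>, its cycle would lie in \<open>S\<^sup>1cS\<^sup>1 \<subseteq> S\<^sup>1xS\<^sup>1\<close> and
  strictly deeper, so the factor is a root. Finally \<open>a\<close> and \<open>b\<close> lie in the stem because the
  elements \<open>s\<close> with \<open>s \<cdot> Ser k \<subseteq> Ser (k + 1)\<close> form an ideal that misses \<open>x\<close>.\<close>

lemma lam_0 [simp]: "lam f x y z 0 = x"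
  by (simp add: lam_def)

lemma rho_0 [simp]: "rho f x y z 0 = y"
  by (simp add: rho_def)

lemma lam_Suc: "lam f x y z (Suc n) = mul3 f (lam f x y z n) (z (Suc n)) (rho f x y z n)"
  by (simp add: lam_def rho_def split: prod.split)

lemma rho_Suc: "rho f x y z (Suc n) = mul3 f (rho f x y z n) (z (Suc n)) (lam f x y z n)"
  by (simp add: lam_def rho_def split: prod.split)

lemma lam_rho_shift:
  "lam f x y z (j + n) = lam f (lam f x y z j) (rho f x y z j) (\<lambda>i. z (j + i)) n \<and>
   rho f x y z (j + n) = rho f (lam f x y z j) (rho f x y z j) (\<lambda>i. z (j + i)) n"
  by (induction n) (simp_all add: lam_Suc rho_Suc)

lemma lam_eq_rho_persists:
  assumes "lam f x y z j = rho f x y z j" and "j \<le> n"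
  shows "lam f x y z n = rho f x y z n"
  using assms(2,1) by (induction n rule: dec_induct) (simp_all add: lam_Suc rho_Suc)

lemma mul3_closed:
  assumes "\<forall>u\<in>U. \<forall>v\<in>U. f u v \<in> U" and "u \<in> U" and "v \<in> U" and "w \<in> one_adj U"
  shows "mul3 f u w v \<in> U"
  using assms by (auto simp: mul3_def one_adj_def)

lemma lam_rho_closed:
  assumes "\<forall>u\<in>U. \<forall>v\<in>U. f u v \<in> U" and "x \<in> U" and "y \<in> U"
    and "\<forall>l\<in>{1..n}. z l \<in> one_adj U"
  shows "lam f x y z n \<in> U \<and> rho f x y z n \<in> U"
  using assms(4)
  by (induction n) (auto simp: lam_Suc rho_Suc assms(2,3) intro!: mul3_closed[OF assms(1)])

lemma mul3_cong:
  assumes "\<forall>u\<in>U. \<forall>v\<in>U. g u v \<in> U" and "\<forall>u\<in>U. \<forall>v\<in>U. g u v = h u v"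
    and "u \<in> U" and "v \<in> U" and "w \<in> one_adj U"
  shows "mul3 g u w v = mul3 h u w v"
  using assms by (auto simp: mul3_def one_adj_def)

lemma lam_rho_cong:
  assumes "\<forall>u\<in>U. \<forall>v\<in>U. g u v \<in> U" and "\<forall>u\<in>U. \<forall>v\<in>U. g u v = h u v"
    and "x \<in> U" and "y \<in> U" and "\<forall>l\<in>{1..n}. z l \<in> one_adj U"
  shows "lam g x y z n = lam h x y z n \<and> rho g x y z n = rho h x y z n"
  using assms(5)
proof (induction n)
  case (Suc n)
  have "lam g x y z n \<in> U \<and> rho g x y z n \<in> U" and "z (Suc n) \<in> one_adj U"
    using lam_rho_closed[OF assms(1,3,4)] Suc.prems by auto
  then show ?case
    using Suc mul3_cong[OF assms(1,2)] by (simp add: lam_Suc rho_Suc)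
qed simp

lemma gen_subset:
  assumes "X \<subseteq> V" and "\<forall>u\<in>V. \<forall>v\<in>V. f u v \<in> V"
  shows "gen f X \<subseteq> V"
proof
  fix u assume "u \<in> gen f X"
  then show "u \<in> V" by (induction rule: gen.induct) (use assms in auto)
qed

lemma gen_closed: "\<forall>u\<in>gen f X. \<forall>v\<in>gen f X. f u v \<in> gen f X"
  by (auto intro: gen.mult)

lemma nilpotent_sg_subsemigroup:
  assumes "nilpotent_sg h V" and "U \<subseteq> V"
    and "\<forall>u\<in>U. \<forall>v\<in>U. g u v \<in> U" and "\<forall>u\<in>U. \<forall>v\<in>U. g u v = h u v"
  shows "nilpotent_sg g U"
proof -
  obtain n where "n \<ge> 1" and nil: "\<forall>a\<in>V. \<forall>b\<in>V. \<forall>c.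
      (\<forall>i\<in>{1..n}. c i \<in> one_adj V) \<longrightarrow> lam h a b c n = rho h a b c n"
    using assms(1) unfolding nilpotent_sg_def by blast
  moreover have "one_adj U \<subseteq> one_adj V"
    using assms(2) by (auto simp: one_adj_def)
  ultimately show ?thesis
    unfolding nilpotent_sg_def using assms(2) lam_rho_cong[OF assms(3,4)] by (metis subsetD)
qed

definition lr_cycle ::
  "('a \<Rightarrow> 'a \<Rightarrow> 'a) \<Rightarrow> 'a set \<Rightarrow> 'a \<Rightarrow> 'a \<Rightarrow> (nat \<Rightarrow> 'a option) \<Rightarrow> nat \<Rightarrow> bool" where
  "lr_cycle f U x y z p \<longleftrightarrow> x \<in> U \<and> y \<in> U \<and> (\<forall>l\<in>{1..p}. z l \<in> one_adj U) \<and> 1 \<le> p \<and>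
     x \<noteq> y \<and> lam f x y z p = x \<and> rho f x y z p = y"

lemma lr_cycle_mono: "lr_cycle f U x y z p \<Longrightarrow> U \<subseteq> V \<Longrightarrow> lr_cycle f V x y z p"
  unfolding lr_cycle_def one_adj_def by blast

lemma finite_not_nilpotent_sg_lr_cycle:
  assumes "finite T" and closed: "\<forall>u\<in>T. \<forall>v\<in>T. f u v \<in> T" and "\<not> nilpotent_sg f T"
  shows "\<exists>x y z p. lr_cycle f T x y z p"
proof -
  define n where "n = card T * card T"
  have "\<not> (\<forall>a\<in>T. \<forall>b\<in>T. \<forall>c. (\<forall>i\<in>{1..Suc n}. c i \<in> one_adj T) \<longrightarrow>
      lam f a b c (Suc n) = rho f a b c (Suc n))"
    using assms(3) unfolding nilpotent_sg_def by (metis le_add1 plus_1_eq_Suc)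
  then obtain a b c where ab: "a \<in> T" "b \<in> T" and c: "\<forall>i\<in>{1..Suc n}. c i \<in> one_adj T"
    and distinct: "lam f a b c (Suc n) \<noteq> rho f a b c (Suc n)"
    by blast
  have c_le: "\<forall>l\<in>{1..i}. c l \<in> one_adj T" if "i \<le> Suc n" for i
    using c that by auto
  define g where "g i = (lam f a b c i, rho f a b c i)" for i
  have "g ` {0..n} \<subseteq> T \<times> T"
    using lam_rho_closed[OF closed ab c_le] by (auto simp: g_def)
  then have "card (g ` {0..n}) \<le> n"
    using card_mono[OF finite_cartesian_product[OF assms(1) assms(1)]]
    by (simp add: n_def card_cartesian_product)
  then have "\<not> inj_on g {0..n}"
    using pigeonhole[of g "{0..n}"] by simp
  then obtain i j where "i \<le> n" "j \<le> n" "i \<noteq> j" "g i = g j"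
    unfolding inj_on_def by auto
  then obtain i j where ij: "i < j" "j \<le> n" "g i = g j"
    by (metis nat_neq_iff)
  define x y where "x = lam f a b c i" and "y = rho f a b c i"
  have "lam f a b c (i + (j - i)) = lam f x y (\<lambda>l. c (i + l)) (j - i) \<and>
        rho f a b c (i + (j - i)) = rho f x y (\<lambda>l. c (i + l)) (j - i)"
    unfolding x_def y_def by (rule lam_rho_shift)
  moreover have "x \<noteq> y"
    using lam_eq_rho_persists[of f a b c i "Suc n"] distinct ij by (auto simp: x_def y_def)
  moreover have "x \<in> T \<and> y \<in> T"
    using lam_rho_closed[OF closed ab c_le] ij unfolding x_def y_def by simp
  moreover have "\<forall>l\<in>{1..j - i}. c (i + l) \<in> one_adj T"
    using c ij by auto
  ultimately have "lr_cycle f T x y (\<lambda>l. c (i + l)) (j - i)"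
    using ij by (auto simp: lr_cycle_def g_def x_def y_def)
  then show ?thesis by blast
qed

lemma rees_carrier_closed:
  assumes "\<forall>u\<in>T. \<forall>v\<in>T. f u v \<in> T" and "u \<in> rees_carrier T I" and "v \<in> rees_carrier T I"
  shows "rees_mult f I u v \<in> rees_carrier T I"
proof -
  obtain s t where st: "s \<in> T" "t \<in> T" "u = rees_img I s" "v = rees_img I t"
    using assms(2,3) by (auto simp: rees_carrier_def)
  then have "rees_mult f I u v \<in> {rees_img I s, rees_img I t, rees_img I (f s t)}"
    by (auto simp: rees_img_def)
  then show ?thesis
    using st assms(1) by (auto simp: rees_carrier_def)
qed

lemma rees_mult_Int:
  assumes "\<forall>u\<in>T. \<forall>v\<in>T. f u v \<in> T" and "T' \<subseteq> T"
    and "u \<in> rees_carrier T' I" and "v \<in> rees_carrier T' I"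
  shows "rees_mult f (T \<inter> I) u v = rees_mult f I u v"
  using assms by (auto simp: rees_carrier_def rees_img_def subset_iff)

lemma nilpotent_sg_rees_restrict:
  assumes nil: "nilpotent_sg (rees_mult f J) (rees_carrier K J)"
    and T_closed: "\<forall>u\<in>T. \<forall>v\<in>T. f u v \<in> T"
    and TK_closed: "\<forall>u\<in>T \<inter> K. \<forall>v\<in>T \<inter> K. f u v \<in> T \<inter> K"
    and x: "x \<in> T \<inter> K - J" and y: "y \<in> T \<inter> K - J"
  shows "nilpotent_sg (rees_mult f (T \<inter> J)) (gen (rees_mult f (T \<inter> J)) {Some x, Some y})"
proof -
  define V where "V = rees_carrier (T \<inter> K) J"
  have agree: "\<forall>u\<in>V. \<forall>v\<in>V. rees_mult f (T \<inter> J) u v = rees_mult f J u v"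
    unfolding V_def using rees_mult_Int[OF T_closed Int_lower1] by blast
  have "Some x \<in> V" and "Some y \<in> V"
    unfolding V_def rees_carrier_def using x y
    by (auto simp: rees_img_def intro!: image_eqI[of "Some x" _ x] image_eqI[of "Some y" _ y])
  then have "gen (rees_mult f (T \<inter> J)) {Some x, Some y} \<subseteq> V"
    using rees_carrier_closed[OF TK_closed] agree unfolding V_def by (intro gen_subset) auto
  moreover have "V \<subseteq> rees_carrier K J"
    unfolding V_def rees_carrier_def by blast
  ultimately show ?thesis
    using agree by (intro nilpotent_sg_subsemigroup[OF nil _ gen_closed]) auto
qed

lemma ideal_of_Int_subsemigroup:
  assumes "ideal_of f S J" and "T \<subseteq> S" and "\<forall>u\<in>T. \<forall>v\<in>T. f u v \<in> T"
  shows "ideal_of f T (T \<inter> J)"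
  using assms by (auto simp: ideal_of_def)

definition principal_ideal :: "('a \<Rightarrow> 'a \<Rightarrow> 'a) \<Rightarrow> 'a set \<Rightarrow> 'a \<Rightarrow> 'a set" where
  "principal_ideal f S a = \<Inter> {I. ideal_of f S I \<and> a \<in> I}"

lemma principal_ideal_least: "ideal_of f S I \<Longrightarrow> a \<in> I \<Longrightarrow> principal_ideal f S a \<subseteq> I"
  by (auto simp: principal_ideal_def)

lemma mem_principal_ideal: "a \<in> principal_ideal f S a"
  by (auto simp: principal_ideal_def)

locale carrier_semigroup =
  fixes S :: "'a set" and f :: "'a \<Rightarrow> 'a \<Rightarrow> 'a"
  assumes semigroup: "semigroup_on S f"
begin

lemma closed: "\<forall>u\<in>S. \<forall>v\<in>S. f u v \<in> S"
  using semigroup by (simp add: semigroup_on_def)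

lemma assoc: "x \<in> S \<Longrightarrow> y \<in> S \<Longrightarrow> z \<in> S \<Longrightarrow> f (f x y) z = f x (f y z)"
  using semigroup by (simp add: semigroup_on_def)

lemma ideal_of_principal:
  assumes "a \<in> S"
  shows "ideal_of f S (principal_ideal f S a)"
proof -
  have "ideal_of f S S"
    using closed by (simp add: ideal_of_def)
  then show ?thesis
    using assms unfolding principal_ideal_def ideal_of_def by blast
qed

lemma ideal_of_colon:
  assumes K: "ideal_of f S K" and L: "ideal_of f S L"
  shows "ideal_of f S {s \<in> S. \<forall>q\<in>K. f s q \<in> L}"
  unfolding ideal_of_def
proof (intro conjI ballI)
  fix s t assume s: "s \<in> {s \<in> S. \<forall>q\<in>K. f s q \<in> L}" and t: "t \<in> S"
  have "f (f s t) q \<in> L" if "q \<in> K" for q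
    using s t that K assoc by (auto simp: ideal_of_def)
  then show "f s t \<in> {s \<in> S. \<forall>q\<in>K. f s q \<in> L}"
    using s t closed by blast
  have "f (f t s) q \<in> L" if "q \<in> K" for q
    using s t that K L assoc by (auto simp: ideal_of_def subset_iff)
  then show "f t s \<in> {s \<in> S. \<forall>q\<in>K. f s q \<in> L}"
    using s t closed by blast
qed auto

lemma mul3_in_ideal:
  assumes "ideal_of f S I" and "u \<in> S" and "v \<in> S" and "w \<in> one_adj S"
    and "u \<in> I \<or> v \<in> I \<or> w \<in> Some ` I"
  shows "mul3 f u w v \<in> I"
  using assms closed by (auto simp: mul3_def one_adj_def ideal_of_def subset_iff)

lemma lam_rho_in_ideal:
  assumes I: "ideal_of f S I" and xy: "x \<in> S" "y \<in> S" and z: "\<forall>l\<in>{1..n}. z l \<in> one_adj S"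
    and "j < n" and hit: "lam f x y z j \<in> I \<or> rho f x y z j \<in> I \<or> z (Suc j) \<in> Some ` I"
  shows "lam f x y z n \<in> I \<and> rho f x y z n \<in> I"
proof -
  have in_S: "lam f x y z i \<in> S \<and> rho f x y z i \<in> S" and z_S: "z (Suc i) \<in> one_adj S"
    if "i < n" for i
    using lam_rho_closed[OF closed xy, of i z] z that by auto
  from \<open>j < n\<close> have "Suc j \<le> n" by simp
  then show ?thesis
  proof (induction n rule: dec_induct)
    case base
    show ?case
      using in_S[OF \<open>j < n\<close>] z_S[OF \<open>j < n\<close>] hit
      by (auto simp: lam_Suc rho_Suc intro!: mul3_in_ideal[OF I])
  next
    case (step i)
    then show ?case
      using mul3_in_ideal[OF I] in_S z_S by (simp add: lam_Suc rho_Suc)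
  qed
qed

lemma lr_cycle_in_ideal:
  assumes cyc: "lr_cycle f S x y z p" and I: "ideal_of f S I"
    and "x \<in> I \<or> y \<in> I \<or> (\<exists>l\<in>{1..p}. z l \<in> Some ` I)"
  shows "x \<in> I \<and> y \<in> I"
proof -
  obtain j where j: "j < p" and hit: "lam f x y z j \<in> I \<or> rho f x y z j \<in> I \<or> z (Suc j) \<in> Some ` I"
  proof (cases "x \<in> I \<or> y \<in> I")
    case True
    then show ?thesis using that[of 0] cyc by (auto simp: lr_cycle_def)
  next
    case False
    then obtain l where "l \<in> {1..p}" "z l \<in> Some ` I" using assms(3) by blast
    then show ?thesis using that[of "l - 1"] by auto
  qed
  then have "lam f x y z p \<in> I \<and> rho f x y z p \<in> I"
    using lam_rho_in_ideal[OF I _ _ _ j hit] cyc unfolding lr_cycle_def by blast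
  then show ?thesis
    using cyc by (simp add: lr_cycle_def)
qed

lemma gen_commute:
  assumes "u \<in> S" and "X \<subseteq> S" and "\<forall>x\<in>X. f u x = f x u" and "v \<in> gen f X"
  shows "f u v = f v u"
  using assms(4)
proof (induction rule: gen.induct)
  case (mult v w)
  have "v \<in> S" "w \<in> S"
    using mult.hyps gen_subset[OF assms(2) closed] by auto
  then show ?case
    using mult.IH assms(1) assoc by metis
qed (use assms in auto)

lemma gen_singleton_commute:
  assumes "b \<in> S" and "u \<in> gen f {b}" and "v \<in> gen f {b}"
  shows "f u v = f v u"
proof -
  have "u \<in> S"
    using gen_subset[OF _ closed, of "{b}"] assms by auto
  moreover have "f u b = f b u"
    using gen_commute[of b "{b}" u] assms by auto
  ultimately show ?thesis
    using gen_commute[of u "{b}" v] assms by auto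
qed

lemma lam_eq_rho_1_if_commute:
  assumes "C \<subseteq> S" and comm: "\<forall>u\<in>C. \<forall>v\<in>C. f u v = f v u"
    and "x \<in> C" and "y \<in> C" and "z 1 \<in> one_adj C"
  shows "lam f x y z 1 = rho f x y z 1"
proof (cases "z 1")
  case None
  then show ?thesis
    using comm assms(3,4) lam_Suc[of f x y z 0] rho_Suc[of f x y z 0] by (simp add: mul3_def)
next
  case (Some w)
  then have "w \<in> C" using assms(5) by (auto simp: one_adj_def)
  then have "f (f x w) y = f (f y w) x"
    using comm assms(1,3,4) assoc by (metis subsetD)
  then show ?thesis
    using Some lam_Suc[of f x y z 0] rho_Suc[of f x y z 0] by (simp add: mul3_def)
qed

lemma gen_pair_subset:
  assumes "a \<in> S" and "b \<in> S"
  shows "gen f {a, b} \<subseteq> gen f {b} \<union> principal_ideal f S a"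
proof
  have J: "ideal_of f S (principal_ideal f S a)"
    using ideal_of_principal[OF assms(1)] .
  have S: "gen f {a, b} \<subseteq> S"
    using gen_subset[OF _ closed] assms by auto
  fix u assume "u \<in> gen f {a, b}"
  then show "u \<in> gen f {b} \<union> principal_ideal f S a"
  proof (induction rule: gen.induct)
    case (base x)
    then show ?case
      using mem_principal_ideal[of a f S] gen.base[of b "{b}" f] by auto
  next
    case (mult u v)
    then show ?case
      using J S gen.mult[of u f "{b}" v] unfolding ideal_of_def by blast
  qed
qed

text \<open>If \<open>x\<close> lay outside the ideal generated by \<open>a\<close>, then so would \<open>y\<close> and the first word, so
  \<open>x\<close>, \<open>y\<close> and \<open>z 1\<close> would all be powers of \<open>b\<close>; these commute, which collapses the pair
  after one step.\<close>

lemma lr_cycle_in_principal_ideal: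
  assumes a: "a \<in> S" and b: "b \<in> S" and cyc: "lr_cycle f (gen f {a, b}) x y z p"
  shows "x \<in> principal_ideal f S a"
proof (rule ccontr)
  let ?J = "principal_ideal f S a"
  assume x: "x \<notin> ?J"
  have gen_S: "gen f {a, b} \<subseteq> S"
    using gen_subset[OF _ closed] a b by auto
  have p: "1 \<le> p" and z1: "z 1 \<in> one_adj (gen f {a, b})"
    using cyc by (auto simp: lr_cycle_def)
  have "1 \<in> {1..p}"
    using p by simp
  then have y: "y \<notin> ?J" and "z 1 \<notin> Some ` ?J"
    using lr_cycle_in_ideal[OF lr_cycle_mono[OF cyc gen_S] ideal_of_principal[OF a]] x by blast+
  then have "z 1 \<in> one_adj (gen f {b})"
    using z1 gen_pair_subset[OF a b] unfolding one_adj_def by blast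
  moreover have "x \<in> gen f {b}" "y \<in> gen f {b}"
    using cyc x y gen_pair_subset[OF a b] by (auto simp: lr_cycle_def)
  ultimately have "lam f x y z 1 = rho f x y z 1"
    using lam_eq_rho_1_if_commute[OF gen_subset[OF _ closed]] b gen_singleton_commute[OF b]
    by blast
  then have "lam f x y z p = rho f x y z p"
    using lam_eq_rho_persists[OF _ p] by simp
  then show False
    using cyc unfolding lr_cycle_def by metis
qed

lemma not_nilpotent_pair_lr_cycle:
  assumes "finite S" and a: "a \<in> S" and b: "b \<in> S" and "\<not> nilpotent_sg f (gen f {a, b})"
  shows "\<exists>x y z p. lr_cycle f S x y z p \<and>
    x \<in> principal_ideal f S a \<and> x \<in> principal_ideal f S b"
proof -
  have gen_S: "gen f {a, b} \<subseteq> S"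
    using gen_subset[OF _ closed] a b by auto
  obtain x y z p where cyc: "lr_cycle f (gen f {a, b}) x y z p"
    using finite_not_nilpotent_sg_lr_cycle[OF finite_subset[OF gen_S assms(1)] gen_closed assms(4)]
    by blast
  moreover have "lr_cycle f (gen f {b, a}) x y z p"
    using cyc by (simp add: insert_commute)
  ultimately show ?thesis
    using lr_cycle_in_principal_ideal[OF a b] lr_cycle_in_principal_ideal[OF b a]
      lr_cycle_mono[OF _ gen_S] by blast
qed

end

locale principal_series_semigroup = carrier_semigroup +
  fixes Ser :: "nat \<Rightarrow> 'a set" and m :: nat
  assumes series: "principal_series f S Ser m"
begin

lemma Ser_ideal: "1 \<le> i \<Longrightarrow> i \<le> m + 1 \<Longrightarrow> ideal_of f S (Ser i)"
  using series by (simp add: principal_series_def)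

lemma Ser_subset:
  assumes "1 \<le> i" and "i \<le> j" and "j \<le> m + 1"
  shows "Ser j \<subseteq> Ser i"
  using assms(2,3)
proof (induction j rule: dec_induct)
  case (step n)
  then have "Ser (n + 1) \<subset> Ser n"
    using series assms(1) by (simp add: principal_series_def)
  then show ?case
    using step by simp
qed simp

lemma exists_factor:
  assumes "x \<in> S"
  shows "\<exists>k\<in>{1..m}. x \<in> Ser k - Ser (k + 1)"
proof -
  define k where "k = (LEAST k. x \<notin> Ser (Suc k))"
  have "x \<notin> Ser (Suc m)"
    using series by (simp add: principal_series_def)
  then have "x \<notin> Ser (Suc k)" and "k \<le> m"
    unfolding k_def by (rule LeastI, rule Least_le)
  moreover have "k \<noteq> 0"
    using \<open>x \<notin> Ser (Suc k)\<close> assms series by (auto simp: principal_series_def)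
  moreover have "x \<in> Ser (Suc (k - 1))"
    using not_less_Least[of "k - 1" "\<lambda>k. x \<notin> Ser (Suc k)"] \<open>k \<noteq> 0\<close> unfolding k_def by force
  ultimately show ?thesis
    by (intro bexI[of _ k]) auto
qed

text \<open>\<open>principal_ideal x \<union> Ser (k + 1)\<close> is an ideal strictly between \<open>Ser (k + 1)\<close> and \<open>Ser k\<close>
  unless it is \<open>Ser k\<close>.\<close>

lemma factor_subset_principal_ideal:
  assumes k: "k \<in> {1..m}" and x: "x \<in> Ser k - Ser (k + 1)"
  shows "Ser k - Ser (k + 1) \<subseteq> principal_ideal f S x"
proof -
  have Ser_k: "ideal_of f S (Ser k)" and Ser_k1: "ideal_of f S (Ser (k + 1))"
    using Ser_ideal k by auto
  let ?I = "principal_ideal f S x \<union> Ser (k + 1)"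
  have "x \<in> S"
    using x Ser_k by (auto simp: ideal_of_def)
  then have "ideal_of f S ?I"
    using ideal_of_principal Ser_k1 by (auto simp: ideal_of_def)
  moreover have "?I \<subseteq> Ser k"
    using principal_ideal_least[OF Ser_k] Ser_subset[of k "k + 1"] x k by auto
  moreover have "Ser (k + 1) \<subset> ?I"
    using x mem_principal_ideal[of x f S] by auto
  ultimately have "?I = Ser k"
    using series k unfolding principal_series_def by blast
  then show ?thesis
    by auto
qed

lemma lr_cycle_factor:
  assumes cyc: "lr_cycle f S x y z p" and k: "k \<in> {1..m}" and x: "x \<in> Ser k - Ser (k + 1)"
  shows "y \<in> Ser k - Ser (k + 1)"
  using lr_cycle_in_ideal[OF cyc, of "Ser k"] lr_cycle_in_ideal[OF cyc, of "Ser (k + 1)"]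
    Ser_ideal k x by auto

lemma mem_stem_set:
  assumes k: "k \<in> {1..m}" and "a \<in> S" and "q \<in> Ser k" and "f a q \<notin> Ser (k + 1)"
  shows "a \<in> stem_set f S Ser k"
proof -
  have "ideal_of f S (Ser k)" and I: "ideal_of f S (Ser (k + 1))"
    using Ser_ideal k by auto
  then have "q \<in> S" and "q \<notin> Ser (k + 1)"
    using assms(2-4) by (auto simp: ideal_of_def)
  moreover have "a \<in> Ser k \<Longrightarrow> a \<notin> Ser (k + 1)"
    using I assms(4) \<open>q \<in> S\<close> by (auto simp: ideal_of_def)
  ultimately show ?thesis
    using assms by (auto simp: stem_set_def F_set_def)
qed

text \<open>The elements \<open>s\<close> with \<open>s \<cdot> Ser k \<subseteq> Ser (k + 1)\<close> form an ideal. It cannot contain the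
  cycle point \<open>x\<close>, since \<open>x = \<lambda>\<^sub>p\<close> would then lie in \<open>Ser (k + 1)\<close> together with
  \<open>\<lambda>\<^sub>1 = x z\<^sub>1 y\<close>; hence it cannot contain any \<open>a\<close> whose principal ideal contains \<open>x\<close>.\<close>

lemma lr_cycle_stem_set:
  assumes cyc: "lr_cycle f S x y z p" and k: "k \<in> {1..m}" and x: "x \<in> Ser k - Ser (k + 1)"
    and a: "a \<in> S" and xa: "x \<in> principal_ideal f S a"
  shows "a \<in> stem_set f S Ser k"
proof (rule ccontr)
  assume "a \<notin> stem_set f S Ser k"
  have Ser_k: "ideal_of f S (Ser k)" and Ser_k1: "ideal_of f S (Ser (k + 1))"
    using Ser_ideal k by auto
  let ?C = "{s \<in> S. \<forall>q\<in>Ser k. f s q \<in> Ser (k + 1)}"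
  have "a \<in> ?C"
    using mem_stem_set[OF k a] \<open>a \<notin> stem_set f S Ser k\<close> a by blast
  then have x_C: "x \<in> ?C"
    using principal_ideal_least[OF ideal_of_colon[OF Ser_k Ser_k1]] xa by blast
  have y: "y \<in> Ser k" and p: "1 \<le> p" and z1: "z 1 \<in> one_adj S"
    using lr_cycle_factor[OF cyc k x] cyc by (auto simp: lr_cycle_def)
  have "lam f x y z 1 \<in> Ser (k + 1)"
  proof (cases "z 1")
    case None
    then show ?thesis
      using x_C y lam_Suc[of f x y z 0] by (simp add: mul3_def)
  next
    case (Some w)
    then have "w \<in> S"
      using z1 by (auto simp: one_adj_def)
    then have "f (f x w) y = f x (f w y)" and "f w y \<in> Ser k"
      using x_C y Ser_k assoc by (auto simp: ideal_of_def)
    then show ?thesis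
      using Some x_C lam_Suc[of f x y z 0] by (simp add: mul3_def)
  qed
  then have "lam f x y z p \<in> Ser (k + 1)"
    using lam_rho_in_ideal[OF Ser_k1, of x y p z 1] cyc p
    by (cases "p = 1") (auto simp: lr_cycle_def)
  then show False
    using cyc x by (simp add: lr_cycle_def)
qed

text \<open>Pseudo-nilpotency, applied to the cycle with \<open>t = 0\<close> and the ideal \<open>T \<inter> Ser (k + 1)\<close> of
  the subsemigroup \<open>T\<close> generated by the cycle data, makes \<open>\<langle>x, y\<rangle>\<close> non-nilpotent in the Rees
  factor of \<open>T\<close>; that factor embeds into \<open>Ser k / Ser (k + 1)\<close> on the image of \<open>T \<inter> Ser k\<close>.\<close>

lemma lr_cycle_factor_not_nilpotent:
  assumes pn: "pseudo_nilpotent f S" and cyc: "lr_cycle f S x y z p"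
    and k: "k \<in> {1..m}" and x: "x \<in> Ser k - Ser (k + 1)"
  shows "\<not> nilpotent_sg (rees_mult f (Ser (k + 1))) (rees_carrier (Ser k) (Ser (k + 1)))"
proof
  assume nil: "nilpotent_sg (rees_mult f (Ser (k + 1))) (rees_carrier (Ser k) (Ser (k + 1)))"
  have Ser_k: "ideal_of f S (Ser k)" and Ser_k1: "ideal_of f S (Ser (k + 1))"
    using Ser_ideal k by auto
  have y: "y \<in> Ser k - Ser (k + 1)"
    by (rule lr_cycle_factor[OF cyc k x])
  have z: "\<forall>i\<in>{1..p}. z i \<in> one_adj S"
    using cyc by (simp add: lr_cycle_def)
  define T where "T = gen f ({x, y} \<union> {s. \<exists>i\<in>{1..p}. z i = Some s})"
  define I where "I = T \<inter> Ser (k + 1)"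
  have "s \<in> S" if "i \<in> {1..p}" and "z i = Some s" for i s
    using z[rule_format, OF that(1)] that(2) by (auto simp: one_adj_def)
  then have "{x, y} \<union> {s. \<exists>i\<in>{1..p}. z i = Some s} \<subseteq> S"
    using cyc by (auto simp: lr_cycle_def)
  then have T_S: "T \<subseteq> S"
    unfolding T_def by (rule gen_subset[OF _ closed])
  have T_closed: "\<forall>u\<in>T. \<forall>v\<in>T. f u v \<in> T"
    unfolding T_def by (rule gen_closed)
  have x_T: "x \<in> T" and y_T: "y \<in> T"
    unfolding T_def by (auto intro: gen.base)
  have "ideal_of f T I"
    unfolding I_def by (rule ideal_of_Int_subsemigroup[OF Ser_k1 T_S T_closed])
  moreover have "x \<in> S" "y \<in> S" "0 < p" "lam f x y z 0 \<noteq> rho f x y z 0"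
    "lam f x y z 0 = lam f x y z p" "rho f x y z 0 = rho f x y z p"
    "lam f x y z p \<notin> I" "rho f x y z p \<notin> I"
    using cyc x y by (auto simp: lr_cycle_def I_def)
  ultimately have "nn_edge (rees_mult f I) (rees_carrier T I)
      (rees_img I (lam f x y z 0)) (rees_img I (rho f x y z 0))"
    using pn[unfolded pseudo_nilpotent_def, rule_format, OF _ _ z[rule_format] T_def,
        where t = 0 and i = 0]
    by blast
  then have "nn_edge (rees_mult f I) (rees_carrier T I) (rees_img I x) (rees_img I y)"
    by simp
  moreover have "rees_img I x = Some x" and "rees_img I y = Some y"
    using x y by (auto simp: rees_img_def I_def)
  ultimately have not_nil: "\<not> nilpotent_sg (rees_mult f I) (gen (rees_mult f I) {Some x, Some y})"
    by (simp add: nn_edge_def)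
  have "\<forall>u\<in>T \<inter> Ser k. \<forall>v\<in>T \<inter> Ser k. f u v \<in> T \<inter> Ser k"
    using T_closed T_S Ser_k unfolding ideal_of_def by blast
  then have "nilpotent_sg (rees_mult f I) (gen (rees_mult f I) {Some x, Some y})"
    unfolding I_def using nilpotent_sg_rees_restrict[OF nil T_closed] x y x_T y_T by blast
  then show False
    using not_nil by contradiction
qed

lemma not_nilpotent_deeper_lr_cycle:
  assumes "finite S" and k: "k \<in> {1..m}" and c: "c \<in> Ser k - Ser (k + 1)"
    and d: "d \<in> Ser (k + 1)" and "\<not> nilpotent_sg f (gen f {c, d})"
  shows "\<exists>j\<in>{k<..m}. \<exists>x y z p. lr_cycle f S x y z p \<and> x \<in> Ser j - Ser (j + 1) \<and>
    x \<in> principal_ideal f S c"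
proof -
  have "ideal_of f S (Ser k)" and Ser_k1: "ideal_of f S (Ser (k + 1))"
    using Ser_ideal k by auto
  then have "c \<in> S" and "d \<in> S"
    using c d unfolding ideal_of_def by auto
  then obtain x y z p where cyc: "lr_cycle f S x y z p"
    and xc: "x \<in> principal_ideal f S c" and xd: "x \<in> principal_ideal f S d"
    using not_nilpotent_pair_lr_cycle assms(1,5) by blast
  then obtain j where j: "j \<in> {1..m}" "x \<in> Ser j - Ser (j + 1)"
    using exists_factor unfolding lr_cycle_def by blast
  have "x \<in> Ser (k + 1)"
    using principal_ideal_least[OF Ser_k1 d] xd by blast
  then have "k < j"
  proof (rule contrapos_pp)
    assume "\<not> k < j"
    then have "Ser (k + 1) \<subseteq> Ser (j + 1)"
      using Ser_subset[of "j + 1" "k + 1"] k by simp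
    then show "x \<notin> Ser (k + 1)"
      using j by blast
  qed
  then show ?thesis
    using cyc xc j by (intro bexI[of _ j]) auto
qed

lemma is_root_if_no_deeper_lr_cycle:
  assumes "finite S" and pn: "pseudo_nilpotent f S"
    and cyc: "lr_cycle f S x y z p" and k: "k \<in> {1..m}" and x: "x \<in> Ser k - Ser (k + 1)"
    and no_deeper: "\<forall>j\<in>{k<..m}. \<forall>x' y' z' p'. lr_cycle f S x' y' z' p' \<longrightarrow>
      x' \<in> Ser j - Ser (j + 1) \<longrightarrow> x' \<notin> principal_ideal f S x"
  shows "is_root f Ser k"
  unfolding is_root_def
proof (intro conjI ballI)
  show "\<not> nilpotent_sg (rees_mult f (Ser (k + 1))) (rees_carrier (Ser k) (Ser (k + 1)))"
    by (rule lr_cycle_factor_not_nilpotent[OF pn cyc k x])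
next
  fix c d assume c: "c \<in> Ser k - Ser (k + 1)" and d: "d \<in> Ser (k + 1)"
  have "x \<in> S"
    using cyc by (simp add: lr_cycle_def)
  moreover have "c \<in> principal_ideal f S x"
    using factor_subset_principal_ideal[OF k x] c by blast
  ultimately have J_c: "principal_ideal f S c \<subseteq> principal_ideal f S x"
    by (intro principal_ideal_least ideal_of_principal)
  show "nilpotent_sg f (gen f {c, d})"
  proof (rule ccontr)
    assume "\<not> nilpotent_sg f (gen f {c, d})"
    then obtain j x' y' z' p' where "j \<in> {k<..m}" "lr_cycle f S x' y' z' p'"
      "x' \<in> Ser j - Ser (j + 1)" "x' \<in> principal_ideal f S c"
      using not_nilpotent_deeper_lr_cycle[OF assms(1) k c d] by blast
    then show False
      using no_deeper J_c by (meson subsetD)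
  qed
qed

lemma not_nilpotent_pair_deepest_lr_cycle:
  assumes "finite S" and a: "a \<in> S" and b: "b \<in> S" and "\<not> nilpotent_sg f (gen f {a, b})"
  obtains k x y z p where "k \<in> {1..m}" and "lr_cycle f S x y z p"
    and "x \<in> Ser k - Ser (k + 1)"
    and "x \<in> principal_ideal f S a" and "x \<in> principal_ideal f S b"
    and "\<forall>j\<in>{k<..m}. \<forall>x' y' z' p'. lr_cycle f S x' y' z' p' \<longrightarrow>
      x' \<in> Ser j - Ser (j + 1) \<longrightarrow> x' \<notin> principal_ideal f S x"
proof -
  define K where "K = {k \<in> {1..m}. \<exists>x y z p. lr_cycle f S x y z p \<and> x \<in> Ser k - Ser (k + 1) \<and>
    x \<in> principal_ideal f S a \<and> x \<in> principal_ideal f S b}"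
  obtain x y z p where "lr_cycle f S x y z p"
    and "x \<in> principal_ideal f S a" and "x \<in> principal_ideal f S b"
    using not_nilpotent_pair_lr_cycle[OF assms] by blast
  moreover obtain k where "k \<in> {1..m}" "x \<in> Ser k - Ser (k + 1)"
    using exists_factor \<open>lr_cycle f S x y z p\<close> unfolding lr_cycle_def by blast
  ultimately have "k \<in> K"
    unfolding K_def by blast
  moreover have "finite K"
    unfolding K_def by simp
  ultimately have "Max K \<in> K" and max: "\<forall>j\<in>K. j \<le> Max K"
    by (auto intro: Max_in)
  then obtain x y z p where cyc: "lr_cycle f S x y z p" and k: "Max K \<in> {1..m}"
    and x: "x \<in> Ser (Max K) - Ser (Max K + 1)"
    and xa: "x \<in> principal_ideal f S a" and xb: "x \<in> principal_ideal f S b"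
    unfolding K_def by blast
  have J_x: "principal_ideal f S x \<subseteq> principal_ideal f S a \<inter> principal_ideal f S b"
    using principal_ideal_least[OF ideal_of_principal[OF a] xa]
      principal_ideal_least[OF ideal_of_principal[OF b] xb] by (rule Int_greatest)
  have "\<forall>j\<in>{Max K<..m}. \<forall>x' y' z' p'. lr_cycle f S x' y' z' p' \<longrightarrow>
      x' \<in> Ser j - Ser (j + 1) \<longrightarrow> x' \<notin> principal_ideal f S x"
  proof (intro ballI allI impI notI)
    fix j x' y' z' p' assume j: "j \<in> {Max K<..m}" and "lr_cycle f S x' y' z' p'"
      and "x' \<in> Ser j - Ser (j + 1)" and "x' \<in> principal_ideal f S x"
    with J_x have "j \<in> K"
      unfolding K_def by auto
    then show False
      using max j by fastforce
  qed
  then show ?thesis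
    using that k cyc x xa xb by blast
qed

end

theorem corollary3p9:
  fixes f :: "'a \<Rightarrow> 'a \<Rightarrow> 'a" and S :: "'a set" and Ser :: "nat \<Rightarrow> 'a set"
    and m :: nat and a b :: 'a
  assumes "semigroup_on S f" and "finite S" and "pseudo_nilpotent f S"
    and "principal_series f S Ser m"
    and "a \<in> S" and "b \<in> S"
    and "nn_edge f S a b"
  shows "\<exists>i\<in>{1..m}. is_root f Ser i \<and> a \<in> stem_set f S Ser i \<and> b \<in> stem_set f S Ser i"
proof -
  interpret principal_series_semigroup S f Ser m
    using assms(1,4) by unfold_locales
  obtain k x y z p where k: "k \<in> {1..m}" and cyc: "lr_cycle f S x y z p"
    and x: "x \<in> Ser k - Ser (k + 1)"
    and xa: "x \<in> principal_ideal f S a" and xb: "x \<in> principal_ideal f S b"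
    and deepest: "\<forall>j\<in>{k<..m}. \<forall>x' y' z' p'. lr_cycle f S x' y' z' p' \<longrightarrow>
      x' \<in> Ser j - Ser (j + 1) \<longrightarrow> x' \<notin> principal_ideal f S x"
    using not_nilpotent_pair_deepest_lr_cycle[OF assms(2,5,6)] assms(7)
    unfolding nn_edge_def by blast
  have "is_root f Ser k"
    using is_root_if_no_deeper_lr_cycle[OF assms(2,3) cyc k x deepest] .
  moreover have "a \<in> stem_set f S Ser k" and "b \<in> stem_set f S Ser k"
    using lr_cycle_stem_set[OF cyc k x] assms(5,6) xa xb by auto
  ultimately show ?thesis
    using k by blast
qed

end
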